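(* For all retractable contracts $\rho,\sigma$: if the judgment $\vartriangleright\rho\dashv\sigma$ (with empty assumption set) is derivable in the formal system for compliance, then $\rho$ is compliant with $\sigma$.
   Context: Let $\mathcal N$ be a countable set of names and $\overline{\mathcal N}=\{\bar a\mid a\in\mathcal N\}$ a disjoint set of conames; $\alpha$ ranges over $\mathcal N\cup\overline{\mathcal N}$, with $\bar{\bar a}=a$. Retractable contracts are the closed expressions generated by $\sigma ::= \mathbf 1 \mid \sum_{i\in I} a_i.\sigma_i \ (\text{input}) \mid \sum_{i\in I}\bar a_i.\sigma_i\ (\text{retractable output}) \mid \bigoplus_{i\in I}\bar a_i.\sigma_i\ (\text{unretractable output}) \mid x \mid \mathsf{rec}\,x.\sigma$, where $I$ is non-empty and finite, names/conames in each choice are pairwise distinct, and $\sigma$ is not a variable in $\mathsf{rec}\,x.\sigma$. Choices are commutative; $\mathsf{rec}\,x.\sigma$ is identified with $\sigma[\mathsf{rec}\,x.\sigma/x]$. A unary $\bar a.\sigma$ may be read as either kind of output. Histories are stacks $\vec\gamma ::= [\,] \mid \vec\gamma:\sigma$ with $\sigma$ a retractable contract or the special symbol $\circ$. A contract with history is a pair $\langle\vec\gamma,\sigma\rangle$ with $\sigma$ a contract or $\circ$. Transitions: $\langle\vec\gamma,\alpha.\sigma+\sigma'\rangle\xrightarrow{\alpha}\langle\vec\gamma:\sigma',\sigma\rangle$ (for retractable choices, $+$ being input or retractable output sum); $\langle\vec\gamma,\bar a.\sigma\oplus\sigma'\rangle\xrightarrow{\tau}\langle\vec\gamma,\bar a.\sigma\rangle$;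 $\langle\vec\gamma,\alpha.\sigma\rangle\xrightarrow{\alpha}\langle\vec\gamma:\circ,\sigma\rangle$; $\langle\vec\gamma:\sigma',\sigma\rangle\xrightarrow{\mathsf{rb}}\langle\vec\gamma,\sigma'\rangle$. Client/server pairs $\langle\vec\delta,\rho\rangle\parallel\langle\vec\gamma,\sigma\rangle$ reduce by: (comm) if $\langle\vec\delta,\rho\rangle\xrightarrow{\alpha}\langle\vec\delta',\rho'\rangle$ and $\langle\vec\gamma,\sigma\rangle\xrightarrow{\bar\alpha}\langle\vec\gamma',\sigma'\rangle$ then the pair reduces to $\langle\vec\delta',\rho'\rangle\parallel\langle\vec\gamma',\sigma'\rangle$; ($\tau$) a $\tau$-transition of either component alone; (rbk) if both components do an $\mathsf{rb}$ transition and $\rho\neq\mathbf 1$, both roll back simultaneously; rule (rbk) applies only if neither (comm) nor ($\tau$) applies. Then $\langle\vec\delta,\rho\rangle$ is compliant with $\langle\vec\gamma,\sigma\rangle$ if whenever $\langle\vec\delta,\rho\rangle\parallel\langle\vec\gamma,\sigma\rangle$ reduces in finitely many steps to a pair $\langle\vec\delta',\rho'\rangle\parallel\langle\vec\gamma',\sigma'\rangle$ with no further reduction, we have $\rho'=\mathbf 1$. A contract $\rho$ is compliant with $\sigma$ if $\langle[\,],\rho\rangle$ is compliant with $\langle[\,],\sigma\rangle$. The formal system derives judgments $\Gamma\vartriangleright\rho\dashv\sigma$, $\Gamma$ a set of expressions $\rho'\dashv\sigma'$, as finite trees with rules (applied modulo fold/unfold of recursion): (Ax) $\Gamma\vartriangleright\mathbf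 1\dashv\sigma$; (Hyp) $\Gamma,\rho\dashv\sigma\vartriangleright\rho\dashv\sigma$; $(+,+)$ if $\rho=\sum_{i\in I}\alpha_i.\rho_i$, $\sigma=\sum_{j\in J}\bar\alpha_j.\sigma_j$ are retractable choices and $k\in I\cap J$, from $\Gamma,\rho\dashv\sigma\vartriangleright\rho_k\dashv\sigma_k$ infer $\Gamma\vartriangleright\rho\dashv\sigma$; $(\oplus,+)$ from $\Gamma,\bigoplus_{i\in I}\bar a_i.\rho_i\dashv\sum_{j\in I\cup J}a_j.\sigma_j\vartriangleright\rho_i\dashv\sigma_i$ for all $i\in I$ infer $\Gamma\vartriangleright\bigoplus_{i\in I}\bar a_i.\rho_i\dashv\sum_{j\in I\cup J}a_j.\sigma_j$; $(+,\oplus)$ symmetrically, from $\Gamma,\sum_{j\in I\cup J}a_j.\sigma_j\dashv\bigoplus_{i\in I}\bar a_i.\rho_i\vartriangleright\rho_i\dashv\sigma_i$ for all $i\in I$ infer $\Gamma\vartriangleright\sum_{j\in I\cup J}a_j.\sigma_j\dashv\bigoplus_{i\in I}\bar a_i.\rho_i$. *)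

theory Defs
  imports "HOL-Library.Finite_Map"
begin

text \<open>Retractable contracts, represented as the (regular) trees denoted by the
closed contractive recursive expressions; this builds in the identification of
rec x.s with its unfolding and the commutativity of choices.
Inp m = sum of inputs a.s_a (a in dom m); ROut m = retractable output sum;
UOut m = unretractable output sum.\<close>

codatatype 'n ctr =
    One
  | Inp "('n, 'n ctr) fmap"
  | ROut "('n, 'n ctr) fmap"
  | UOut "('n, 'n ctr) fmap"

fun children :: "'n ctr \<Rightarrow> 'n ctr set" where
  "children One = {}"
| "children (Inp m) = fmran' m"
| "children (ROut m) = fmran' m"
| "children (UOut m) = fmran' m"

inductive reach :: "'n ctr \<Rightarrow> 'n ctr \<Rightarrow> bool" where
  refl: "reach t t"
| step: "reach t s \<Longrightarrow> c \<in> children s \<Longrightarrow> reach t c"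

text \<open>Local well-formedness: choices are non-empty; a unary output is always
represented as ROut (an unretractable choice is a proper one, with at least
two branches), the unary one being readable as either kind in the rules below.\<close>
fun local_ok :: "'n ctr \<Rightarrow> bool" where
  "local_ok One = True"
| "local_ok (Inp m) = (fmdom' m \<noteq> {})"
| "local_ok (ROut m) = (fmdom' m \<noteq> {})"
| "local_ok (UOut m) = (card (fmdom' m) \<ge> 2)"

definition retractable_contract :: "'n ctr \<Rightarrow> bool" where
  "retractable_contract t \<longleftrightarrow>
     finite {s. reach t s} \<and> (\<forall>s. reach t s \<longrightarrow> local_ok s)"

abbreviation single :: "'n \<Rightarrow> 'n ctr \<Rightarrow> ('n, 'n ctr) fmap" where
  "single a s \<equiv> fmupd a s fmempty"

datatype 'n act = AIn 'n | AOut 'n | Tau | Rb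

fun dual :: "'n act \<Rightarrow> 'n act" where
  "dual (AIn a) = AOut a"
| "dual (AOut a) = AIn a"
| "dual Tau = Tau"
| "dual Rb = Rb"

text \<open>A contract with history: a stack (head of the list = top) of entries,
each a contract (Some) or the special symbol \<circ> (None), together with
a contract or \<circ>.\<close>
type_synonym 'n hstate = "'n ctr option list \<times> 'n ctr option"

inductive lts :: "'n hstate \<Rightarrow> 'n act \<Rightarrow> 'n hstate \<Rightarrow> bool" where
  inp_choice: "fmlookup m a = Some s \<Longrightarrow> card (fmdom' m) \<ge> 2 \<Longrightarrow>
     lts (h, Some (Inp m)) (AIn a) (Some (Inp (fmdrop a m)) # h, Some s)"
| rout_choice: "fmlookup m a = Some s \<Longrightarrow> card (fmdom' m) \<ge> 2 \<Longrightarrow>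
     lts (h, Some (ROut m)) (AOut a) (Some (ROut (fmdrop a m)) # h, Some s)"
| uout_tau: "fmlookup m a = Some s \<Longrightarrow> card (fmdom' m) \<ge> 2 \<Longrightarrow>
     lts (h, Some (UOut m)) Tau (h, Some (ROut (single a s)))"
| inp_prefix: "lts (h, Some (Inp (single a s))) (AIn a) (None # h, Some s)"
| out_prefix: "lts (h, Some (ROut (single a s))) (AOut a) (None # h, Some s)"
| rollback: "lts (x # h, r) Rb (h, x)"

inductive red0 :: "'n hstate \<times> 'n hstate \<Rightarrow> 'n hstate \<times> 'n hstate \<Rightarrow> bool" where
  comm: "lts c \<alpha> c' \<Longrightarrow> \<alpha> \<noteq> Tau \<Longrightarrow> \<alpha> \<noteq> Rb \<Longrightarrow> lts s (dual \<alpha>) s' \<Longrightarrow>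
     red0 (c, s) (c', s')"
| tau_client: "lts c Tau c' \<Longrightarrow> red0 (c, s) (c', s)"
| tau_server: "lts s Tau s' \<Longrightarrow> red0 (c, s) (c, s')"

definition red :: "'n hstate \<times> 'n hstate \<Rightarrow> 'n hstate \<times> 'n hstate \<Rightarrow> bool" where
  "red p q \<longleftrightarrow> red0 p q \<or>
     ((\<nexists>q'. red0 p q') \<and>
      (\<exists>c s c' s'. p = (c, s) \<and> q = (c', s') \<and> lts c Rb c' \<and> lts s Rb s' \<and>
                   snd c \<noteq> Some One))"

definition compliant_h :: "'n hstate \<Rightarrow> 'n hstate \<Rightarrow> bool" where
  "compliant_h c s \<longleftrightarrow>
     (\<forall>c' s'. red\<^sup>*\<^sup>* (c, s) (c', s') \<and> (\<nexists>q. red (c', s') q) \<longrightarrow> snd c' = Some One)"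

definition compliant :: "'n ctr \<Rightarrow> 'n ctr \<Rightarrow> bool" where
  "compliant \<rho> \<sigma> \<longleftrightarrow> compliant_h ([], Some \<rho>) ([], Some \<sigma>)"

fun unretr_out :: "'n ctr \<Rightarrow> ('n, 'n ctr) fmap option" where
  "unretr_out (UOut m) = Some m"
| "unretr_out (ROut m) = (if card (fmdom' m) = 1 then Some m else None)"
| "unretr_out _ = None"

text \<open>The formal system: derivable G r s  stands for  G |> r -| s.\<close>
inductive derivable :: "('n ctr \<times> 'n ctr) set \<Rightarrow> 'n ctr \<Rightarrow> 'n ctr \<Rightarrow> bool" where
  Ax: "derivable G One s"
| Hyp: "(r, s) \<in> G \<Longrightarrow> derivable G r s"
| PlusPlus_in_out: "fmlookup m k = Some r' \<Longrightarrow> fmlookup n k = Some s' \<Longrightarrow>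
     derivable (insert (Inp m, ROut n) G) r' s' \<Longrightarrow> derivable G (Inp m) (ROut n)"
| PlusPlus_out_in: "fmlookup m k = Some r' \<Longrightarrow> fmlookup n k = Some s' \<Longrightarrow>
     derivable (insert (ROut m, Inp n) G) r' s' \<Longrightarrow> derivable G (ROut m) (Inp n)"
| OplusPlus: "unretr_out r = Some m \<Longrightarrow> fmdom' m \<subseteq> fmdom' n \<Longrightarrow>
     (\<forall>i r' s'. fmlookup m i = Some r' \<longrightarrow> fmlookup n i = Some s' \<longrightarrow>
        derivable (insert (r, Inp n) G) r' s') \<Longrightarrow> derivable G r (Inp n)"
| PlusOplus: "unretr_out s = Some m \<Longrightarrow> fmdom' m \<subseteq> fmdom' n \<Longrightarrow>
     (\<forall>i r' s'. fmlookup n i = Some r' \<longrightarrow> fmlookup m i = Some s' \<longrightarrow>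
        derivable (insert (Inp n, s) G) r' s') \<Longrightarrow> derivable G (Inp n) s"

end

theory Submission
  imports Defs
begin

text \<open>A derivation of \<open>\<rhd> \<rho> \<stileturn> \<sigma>\<close> from no assumptions unfolds: cutting the hypothesis
introduced by its last rule against the derivation itself shows that every premise is again
derivable from no assumptions. Hence along any run one of three things holds: the client has
reached \<open>1\<close>; the current pair is derivable, so a (comm) or (tau) step applies; or a
retractable choice recorded at the same depth of both histories still offers a common branch with
a derivable continuation, so a rollback is possible and leads back to it. No stuck state with a
client other than \<open>1\<close> satisfies this invariant.\<close>

lemma derivable_mono:
  "derivable G r s \<Longrightarrow> G \<subseteq> G' \<Longrightarrow> derivable G' r s"
proof (induction arbitrary: G' rule: derivable.induct)
  case (OplusPlus r m n G)
  then show ?case by (intro derivable.OplusPlus) blast+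
next
  case (PlusOplus s m n G)
  then show ?case by (intro derivable.PlusOplus) blast+
qed (blast intro: derivable.intros)+

lemma derivable_cut:
  "derivable H r s \<Longrightarrow> \<forall>(a, b) \<in> H. derivable G a b \<Longrightarrow> derivable G r s"
proof (induction arbitrary: G rule: derivable.induct)
  case (Ax H s)
  show ?case by (rule derivable.Ax)
next
  case (Hyp r s H)
  then show ?case by blast
next
  case (PlusPlus_in_out m k r' n s' H)
  then show ?case
    by (blast intro: derivable.PlusPlus_in_out derivable.Hyp derivable_mono)
next
  case (PlusPlus_out_in m k r' n s' H)
  then show ?case
    by (blast intro: derivable.PlusPlus_out_in derivable.Hyp derivable_mono)
next
  case (OplusPlus r m n H)
  then show ?case
    by (intro derivable.OplusPlus) (blast intro: derivable.Hyp derivable_mono)+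
next
  case (PlusOplus s m n H)
  then show ?case
    by (intro derivable.PlusOplus) (blast intro: derivable.Hyp derivable_mono)+
qed

lemma derivable_unfold:
  "derivable {(r, s)} r' s' \<Longrightarrow> derivable {} r s \<Longrightarrow> derivable {} r' s'"
  by (erule derivable_cut) simp

definition wf_ctr :: "'n ctr \<Rightarrow> bool" where
  "wf_ctr t \<longleftrightarrow> (\<forall>s. reach t s \<longrightarrow> local_ok s)"

lemma reach_trans: "reach c x \<Longrightarrow> reach t c \<Longrightarrow> reach t x"
  by (induction rule: reach.induct) (auto intro: reach.step)

lemma wf_ctr_local_ok: "wf_ctr t \<Longrightarrow> local_ok t"
  unfolding wf_ctr_def by (simp add: reach.refl)

lemma wf_ctr_branch:
  assumes "wf_ctr t" "t = Inp m \<or> t = ROut m \<or> t = UOut m" "fmlookup m a = Some v"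
  shows "wf_ctr v"
proof -
  have "v \<in> children t" using assms(2,3) by (auto intro: fmran'I)
  then show ?thesis
    using assms(1) unfolding wf_ctr_def by (meson reach.refl reach.step reach_trans)
qed

lemma fmap_eq_single_if_card_1:
  assumes "card (fmdom' m) = 1" "fmlookup m k = Some v"
  shows "m = single k v"
proof (rule fmap_ext)
  fix x
  have "fmdom' m = {k}"
    using assms fmdom'I[OF assms(2)] by (metis card_1_singletonE singletonD)
  then show "fmlookup m x = fmlookup (single k v) x"
    using assms(2) by (cases "x = k") (auto simp flip: fmlookup_dom'_iff)
qed

lemma fmap_card_ge_2_or_single:
  assumes "fmlookup m k = Some v"
  shows "2 \<le> card (fmdom' m) \<or> m = single k v"
proof -
  have "fmdom' m \<noteq> {}" using fmdom'I[OF assms] by blast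
  then have "card (fmdom' m) \<noteq> 0" by simp
  then show ?thesis using fmap_eq_single_if_card_1[OF _ assms] by linarith
qed

definition good_pair :: "'n ctr \<Rightarrow> 'n ctr \<Rightarrow> bool" where
  "good_pair r s \<longleftrightarrow> derivable {} r s \<and> wf_ctr r \<and> wf_ctr s"

text \<open>A retry point: whichever branch is taken, client and server can later roll back here
and take the common branch with a good continuation.\<close>
definition good_branch :: "'n ctr \<Rightarrow> 'n ctr \<Rightarrow> bool" where
  "good_branch x y \<longleftrightarrow> (\<exists>m n k r s. (x = Inp m \<and> y = ROut n \<or> x = ROut m \<and> y = Inp n) \<and>
     fmlookup m k = Some r \<and> fmlookup n k = Some s \<and> good_pair r s)"

definition ready :: "'n ctr \<Rightarrow> 'n ctr \<Rightarrow> bool" where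
  "ready x y \<longleftrightarrow> good_branch x y \<or>
     (\<exists>m. x = UOut m \<and> 2 \<le> card (fmdom' m) \<and>
        (\<forall>a v. fmlookup m a = Some v \<longrightarrow> good_branch (ROut (single a v)) y)) \<or>
     (\<exists>m. y = UOut m \<and> 2 \<le> card (fmdom' m) \<and>
        (\<forall>a v. fmlookup m a = Some v \<longrightarrow> good_branch x (ROut (single a v))))"

lemma unretr_out_cases:
  assumes "unretr_out r = Some m" "wf_ctr r"
    and "\<forall>a v. fmlookup m a = Some v \<longrightarrow> P (ROut (single a v))"
  shows "(\<exists>m. r = UOut m \<and> 2 \<le> card (fmdom' m) \<and>
           (\<forall>a v. fmlookup m a = Some v \<longrightarrow> P (ROut (single a v)))) \<or> P r"
proof (cases r)
  case (UOut m')
  then show ?thesis using assms wf_ctr_local_ok[OF assms(2)] by auto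
next
  case (ROut m')
  then have "m' = m" "card (fmdom' m) = 1" using assms(1) by (auto split: if_splits)
  moreover obtain a where "fmdom' m = {a}" using \<open>card (fmdom' m) = 1\<close> card_1_singletonE by blast
  moreover obtain v where "fmlookup m a = Some v"
    using \<open>fmdom' m = {a}\<close> by (metis fmlookup_dom'_iff insertI1)
  ultimately show ?thesis
    using ROut assms(3) fmap_eq_single_if_card_1 by metis
qed (use assms(1) in auto)

lemma good_pair_ready:
  assumes "good_pair r s"
  shows "r = One \<or> ready r s"
proof -
  have d: "derivable {} r s" and wf: "wf_ctr r" "wf_ctr s"
    using assms by (auto simp: good_pair_def)
  have good: "good_pair r' s'"
    if "derivable {(r, s)} r' s'" "wf_ctr r'" "wf_ctr s'" for r' s'
    using that derivable_unfold[OF _ d] by (simp add: good_pair_def)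
  from d show ?thesis
  proof (cases rule: derivable.cases)
    case (PlusPlus_in_out m k r' n s')
    have "wf_ctr r'" "wf_ctr s'"
      using wf_ctr_branch[OF wf(1) _ PlusPlus_in_out(3)] wf_ctr_branch[OF wf(2) _ PlusPlus_in_out(4)]
        PlusPlus_in_out(1,2)
      by simp_all
    then have "good_pair r' s'" using good PlusPlus_in_out by simp
    then show ?thesis using PlusPlus_in_out unfolding ready_def good_branch_def by blast
  next
    case (PlusPlus_out_in m k r' n s')
    have "wf_ctr r'" "wf_ctr s'"
      using wf_ctr_branch[OF wf(1) _ PlusPlus_out_in(3)] wf_ctr_branch[OF wf(2) _ PlusPlus_out_in(4)]
        PlusPlus_out_in(1,2)
      by simp_all
    then have "good_pair r' s'" using good PlusPlus_out_in by simp
    then show ?thesis using PlusPlus_out_in unfolding ready_def good_branch_def by blast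
  next
    case (OplusPlus m n)
    have "good_branch (ROut (single a v)) (Inp n)" if ma: "fmlookup m a = Some v" for a v
    proof -
      obtain w where w: "fmlookup n a = Some w"
        using OplusPlus(3) fmdom'I[OF ma] by (meson fmlookup_dom'_iff subsetD)
      have "wf_ctr v"
        using wf(1) OplusPlus(2) ma by (cases r) (auto split: if_splits intro: wf_ctr_branch)
      then have "good_pair v w"
        using good OplusPlus ma w wf_ctr_branch[OF wf(2) _ w] by simp
      then show ?thesis using w unfolding good_branch_def by fastforce
    qed
    then show ?thesis
      using unretr_out_cases[OF OplusPlus(2) wf(1), of "\<lambda>x. good_branch x (Inp n)"] OplusPlus(1)
      unfolding ready_def by auto
  next
    case (PlusOplus m n)
    have "good_branch (Inp n) (ROut (single a w))" if ma: "fmlookup m a = Some w" for a w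
    proof -
      obtain v where v: "fmlookup n a = Some v"
        using PlusOplus(3) fmdom'I[OF ma] by (meson fmlookup_dom'_iff subsetD)
      have "wf_ctr w"
        using wf(2) PlusOplus(2) ma by (cases s) (auto split: if_splits intro: wf_ctr_branch)
      then have "good_pair v w"
        using good PlusOplus ma v wf_ctr_branch[OF wf(1) _ v] by simp
      then show ?thesis using v unfolding good_branch_def by fastforce
    qed
    then show ?thesis
      using unretr_out_cases[OF PlusOplus(2) wf(2), of "\<lambda>y. good_branch (Inp n) y"] PlusOplus(1)
      unfolding ready_def by auto
  qed simp_all
qed

lemma good_branch_retractable:
  "good_branch x y \<Longrightarrow> (\<exists>m. x = Inp m \<or> x = ROut m) \<and> (\<exists>n. y = Inp n \<or> y = ROut n)"
  unfolding good_branch_def by blast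

lemma card_fmdom_ge_2:
  assumes "fmlookup m a = Some v" "fmlookup m k = Some w" "a \<noteq> k"
  shows "2 \<le> card (fmdom' m)"
proof -
  have "{a, k} \<subseteq> fmdom' m" using assms(1,2) by (auto intro: fmdom'I)
  then have "card {a, k} \<le> card (fmdom' m)" by (intro card_mono) simp_all
  then show ?thesis using assms(3) by simp
qed

lemma fmap_ex_lookup_if_card_ge_2:
  "2 \<le> card (fmdom' m) \<Longrightarrow> \<exists>a v. fmlookup m a = Some v"
  by (metis card.empty ex_in_conv fmlookup_dom'_iff not_numeral_le_zero)

lemma dual_eq_Tau_iff [simp]: "dual \<alpha> = Tau \<longleftrightarrow> \<alpha> = Tau"
  by (cases \<alpha>) auto

lemma dual_eq_Rb_iff [simp]: "dual \<alpha> = Rb \<longleftrightarrow> \<alpha> = Rb"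
  by (cases \<alpha>) auto

fun drop_branch :: "'n \<Rightarrow> 'n ctr \<Rightarrow> 'n ctr" where
  "drop_branch a (Inp m) = Inp (fmdrop a m)"
| "drop_branch a (ROut m) = ROut (fmdrop a m)"
| "drop_branch a t = t"

lemma lts_retractable:
  assumes "lts (h, Some x) \<alpha> q" "\<alpha> \<noteq> Rb" "x = Inp m \<or> x = ROut m"
  shows "\<exists>a v. (\<alpha> = AIn a \<or> \<alpha> = AOut a) \<and> fmlookup m a = Some v \<and>
           q = ((if 2 \<le> card (fmdom' m) then Some (drop_branch a x) else None) # h, Some v)"
  using assms by (cases rule: lts.cases) auto

lemma lts_UOut:
  "lts (h, Some (UOut m)) \<alpha> q \<Longrightarrow>
     \<alpha> = Rb \<or> \<alpha> = Tau \<and> (\<exists>a v. fmlookup m a = Some v \<and> q = (h, Some (ROut (single a v))))"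
  by (cases rule: lts.cases) auto

lemma lts_One: "lts (h, Some One) \<alpha> q \<Longrightarrow> \<alpha> = Rb"
  by (cases rule: lts.cases) auto

lemma lts_Rb_history: "lts p Rb q \<Longrightarrow> \<exists>e h. fst p = e # h \<and> q = (h, e)"
  by (cases rule: lts.cases) auto

lemma lts_Tau_history: "lts p Tau q \<Longrightarrow> fst q = fst p"
  by (cases rule: lts.cases) auto

lemma lts_visible_history: "lts p \<alpha> q \<Longrightarrow> \<alpha> \<noteq> Rb \<Longrightarrow> \<alpha> \<noteq> Tau \<Longrightarrow> \<exists>e. fst q = e # fst p"
  by (cases rule: lts.cases) auto

lemma ex_lts_Inp: "fmlookup m a = Some v \<Longrightarrow> \<exists>q. lts (h, Some (Inp m)) (AIn a) q"
  using fmap_card_ge_2_or_single by (metis lts.inp_choice lts.inp_prefix)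

lemma ex_lts_ROut: "fmlookup m a = Some v \<Longrightarrow> \<exists>q. lts (h, Some (ROut m)) (AOut a) q"
  using fmap_card_ge_2_or_single by (metis lts.rout_choice lts.out_prefix)

lemma good_branch_red0:
  assumes "good_branch x y"
  shows "\<exists>q. red0 ((hc, Some x), (hs, Some y)) q"
proof -
  obtain m n k r s where or: "x = Inp m \<and> y = ROut n \<or> x = ROut m \<and> y = Inp n"
    and k: "fmlookup m k = Some r" "fmlookup n k = Some s"
    using assms unfolding good_branch_def by blast
  from or show ?thesis
  proof (elim disjE conjE)
    assume "x = Inp m" "y = ROut n"
    then show ?thesis
      using ex_lts_Inp[OF k(1)] ex_lts_ROut[OF k(2)] red0.comm[of _ "AIn k"] by fastforce
  next
    assume "x = ROut m" "y = Inp n"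
    then show ?thesis
      using ex_lts_ROut[OF k(1)] ex_lts_Inp[OF k(2)] red0.comm[of _ "AOut k"] by fastforce
  qed
qed

lemma ready_red0:
  assumes "ready x y"
  shows "\<exists>q. red0 ((hc, Some x), (hs, Some y)) q"
  using assms unfolding ready_def
proof (elim disjE exE conjE)
  fix m assume "x = UOut m" "2 \<le> card (fmdom' m)"
  then show ?thesis
    using fmap_ex_lookup_if_card_ge_2 lts.uout_tau red0.tau_client by metis
next
  fix m assume "y = UOut m" "2 \<le> card (fmdom' m)"
  then show ?thesis
    using fmap_ex_lookup_if_card_ge_2 lts.uout_tau red0.tau_server by metis
qed (rule good_branch_red0)

text \<open>The two histories are pushed and popped in lockstep, so a retry point sits at the same
index of both stacks.\<close>
definition compliance_inv :: "'n hstate \<Rightarrow> 'n hstate \<Rightarrow> bool" where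
  "compliance_inv c s \<longleftrightarrow> snd c = Some One \<or>
     (\<exists>x y. snd c = Some x \<and> snd s = Some y \<and> ready x y) \<or>
     (\<exists>i x y. i < length (fst c) \<and> i < length (fst s) \<and>
        fst c ! i = Some x \<and> fst s ! i = Some y \<and> good_branch x y)"

lemma compliance_inv_good_pair:
  "good_pair x y \<Longrightarrow> compliance_inv (hc, Some x) (hs, Some y)"
  using good_pair_ready unfolding compliance_inv_def by fastforce

lemma compliance_inv_good_branch:
  "good_branch x y \<Longrightarrow> compliance_inv (hc, Some x) (hs, Some y)"
  unfolding compliance_inv_def ready_def by simp

lemma compliance_inv_pushed:
  "good_branch x y \<Longrightarrow> compliance_inv (Some x # hc, c) (Some y # hs, s)"
  unfolding compliance_inv_def by force

lemma good_branch_step: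
  assumes gb: "good_branch x y" and r: "red0 ((hc, Some x), (hs, Some y)) (c', s')"
  shows "compliance_inv c' s'"
proof -
  obtain m n k r s where or: "x = Inp m \<and> y = ROut n \<or> x = ROut m \<and> y = Inp n"
    and k: "fmlookup m k = Some r" "fmlookup n k = Some s" and g: "good_pair r s"
    using gb unfolding good_branch_def by blast
  have xm: "x = Inp m \<or> x = ROut m" and yn: "y = Inp n \<or> y = ROut n" using or by auto
  from r show ?thesis
  proof (cases rule: red0.cases)
    case (comm \<alpha>)
    obtain a v where a: "\<alpha> = AIn a \<or> \<alpha> = AOut a" "fmlookup m a = Some v"
      and c': "c' = ((if 2 \<le> card (fmdom' m) then Some (drop_branch a x) else None) # hc, Some v)"
      using lts_retractable[OF comm(1) comm(3) xm] by blast
    obtain b w where b: "dual \<alpha> = AIn b \<or> dual \<alpha> = AOut b" "fmlookup n b = Some w"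
      and s': "s' = ((if 2 \<le> card (fmdom' n) then Some (drop_branch b y) else None) # hs, Some w)"
      using lts_retractable[OF comm(4) _ yn] comm(3) by auto
    have "b = a" using a(1) b(1) by auto
    show ?thesis
    proof (cases "a = k")
      case True
      then show ?thesis
        using compliance_inv_good_pair[OF g] c' s' a(2) b(2) k \<open>b = a\<close> by simp
    next
      case False
      have "good_branch (drop_branch a x) (drop_branch a y)"
        using or k g False unfolding good_branch_def by (auto intro!: exI[of _ k])
      moreover have "2 \<le> card (fmdom' m)" "2 \<le> card (fmdom' n)"
        using card_fmdom_ge_2[OF a(2) k(1) False] card_fmdom_ge_2[OF b(2) k(2)] \<open>b = a\<close> False
        by simp_all
      ultimately show ?thesis using compliance_inv_pushed c' s' \<open>b = a\<close> by simp
    qed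
  next
    case tau_client
    then show ?thesis using lts_retractable[OF tau_client(2) _ xm] by simp
  next
    case tau_server
    then show ?thesis using lts_retractable[OF tau_server(2) _ yn] by simp
  qed
qed

lemma ready_step:
  assumes "ready x y" and r: "red0 ((hc, Some x), (hs, Some y)) (c', s')"
  shows "compliance_inv c' s'"
  using assms(1) unfolding ready_def
proof (elim disjE exE conjE)
  assume "good_branch x y"
  then show ?thesis using r by (rule good_branch_step)
next
  fix m assume x: "x = UOut m" and card: "2 \<le> card (fmdom' m)"
    and gb: "\<forall>a v. fmlookup m a = Some v \<longrightarrow> good_branch (ROut (single a v)) y"
  obtain n where yn: "y = Inp n \<or> y = ROut n"
    using fmap_ex_lookup_if_card_ge_2[OF card] gb good_branch_retractable by metis
  from r show ?thesis
  proof (cases rule: red0.cases)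
    case (comm \<alpha>)
    then show ?thesis using lts_UOut[of hc m \<alpha> c'] x by simp
  next
    case tau_client
    then obtain a v where "fmlookup m a = Some v" "c' = (hc, Some (ROut (single a v)))"
      using lts_UOut[of hc m Tau c'] x by auto
    then show ?thesis using tau_client(1) by (simp add: gb compliance_inv_good_branch)
  next
    case tau_server
    then show ?thesis using lts_retractable[OF tau_server(2) _ yn] by simp
  qed
next
  fix m assume y: "y = UOut m" and card: "2 \<le> card (fmdom' m)"
    and gb: "\<forall>a v. fmlookup m a = Some v \<longrightarrow> good_branch x (ROut (single a v))"
  obtain n where xn: "x = Inp n \<or> x = ROut n"
    using fmap_ex_lookup_if_card_ge_2[OF card] gb good_branch_retractable by metis
  from r show ?thesis
  proof (cases rule: red0.cases)
    case (comm \<alpha>)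
    then show ?thesis using lts_UOut[of hs m "dual \<alpha>" s'] y by simp
  next
    case tau_client
    then show ?thesis using lts_retractable[OF tau_client(2) _ xn] by simp
  next
    case tau_server
    then obtain a v where "fmlookup m a = Some v" "s' = (hs, Some (ROut (single a v)))"
      using lts_UOut[of hs m Tau s'] y by auto
    then show ?thesis using tau_server(1) by (simp add: gb compliance_inv_good_branch)
  qed
qed

lemma red_client_One:
  assumes "snd c = Some One" and r: "red (c, s) (c', s')"
  shows "snd c' = Some One"
proof -
  obtain hc where c: "c = (hc, Some One)" using assms(1) by (cases c) simp
  have "red0 (c, s) (c', s')" using r assms(1) unfolding red_def by auto
  then show ?thesis
  proof (cases rule: red0.cases)
    case (comm \<alpha>)
    then show ?thesis using lts_One[of hc \<alpha> c'] c by simp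
  next
    case tau_client
    then show ?thesis using lts_One[of hc Tau c'] c by simp
  qed (use assms(1) in simp)
qed

lemma red_retry_point:
  assumes i: "i < length (fst c)" "i < length (fst s)" "fst c ! i = Some x" "fst s ! i = Some y"
    and gb: "good_branch x y" and r: "red (c, s) (c', s')"
  shows "compliance_inv c' s'"
proof -
  have at: "compliance_inv c2 s2"
    if "j < length (fst c2)" "j < length (fst s2)" "fst c2 ! j = Some x" "fst s2 ! j = Some y"
    for j c2 s2
    using that gb unfolding compliance_inv_def by blast
  from r consider (red0) "red0 (c, s) (c', s')" | (rbk) "lts c Rb c'" "lts s Rb s'"
    unfolding red_def by auto
  then show ?thesis
  proof cases
    case red0
    then show ?thesis
    proof (cases rule: red0.cases)
      case (comm \<alpha>)
      obtain e f where "fst c' = e # fst c" "fst s' = f # fst s"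
        using lts_visible_history[OF comm(1)] lts_visible_history[OF comm(4)] comm(2,3) by auto
      then show ?thesis using i by (intro at[of "Suc i"]) simp_all
    next
      case tau_client
      then show ?thesis using i lts_Tau_history[OF tau_client(2)] by (intro at[of i]) simp_all
    next
      case tau_server
      then show ?thesis using i lts_Tau_history[OF tau_server(2)] by (intro at[of i]) simp_all
    qed
  next
    case rbk
    obtain e h f h' where e: "fst c = e # h" "c' = (h, e)" and f: "fst s = f # h'" "s' = (h', f)"
      using lts_Rb_history[OF rbk(1)] lts_Rb_history[OF rbk(2)] by blast
    show ?thesis
    proof (cases i)
      case 0
      then show ?thesis using i e f compliance_inv_good_branch[OF gb] by simp
    next
      case (Suc j)
      then show ?thesis using i e f by (intro at[of j]) simp_all
    qed
  qed
qed

lemma compliance_inv_red: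
  assumes "compliance_inv c s" and r: "red (c, s) (c', s')"
  shows "compliance_inv c' s'"
proof -
  from assms(1) consider (One) "snd c = Some One"
    | (ready) x y where "snd c = Some x" "snd s = Some y" "ready x y"
    | (retry) i x y where "i < length (fst c)" "i < length (fst s)"
        "fst c ! i = Some x" "fst s ! i = Some y" "good_branch x y"
    unfolding compliance_inv_def by blast
  then show ?thesis
  proof cases
    case One
    then show ?thesis using red_client_One r unfolding compliance_inv_def by blast
  next
    case (ready x y)
    obtain hc hs where c: "c = (hc, Some x)" and s: "s = (hs, Some y)"
      using ready(1,2) by (cases c, cases s) auto
    have "red0 (c, s) (c', s')"
      using r ready_red0[OF ready(3)] c s unfolding red_def by blast
    then show ?thesis using ready_step[OF ready(3)] c s by simp
  next
    case retry
    then show ?thesis using red_retry_point r by blast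
  qed
qed

text \<open>A retry point makes both histories non-empty, so rule (rbk) applies when nothing
else does.\<close>
lemma compliance_inv_stuck:
  assumes "compliance_inv c s" and stuck: "\<nexists>q. red (c, s) q"
  shows "snd c = Some One"
proof (rule ccontr)
  assume not_One: "snd c \<noteq> Some One"
  have no_red0: "\<nexists>q. red0 (c, s) q" using stuck unfolding red_def by blast
  from assms(1) not_One show False unfolding compliance_inv_def
  proof (elim disjE exE conjE)
    fix x y assume "snd c = Some x" "snd s = Some y" "ready x y"
    then show False using ready_red0 no_red0 by (metis prod.collapse)
  next
    fix i x y assume "i < length (fst c)" "i < length (fst s)"
    then obtain e h f h' where "fst c = e # h" "fst s = f # h'"
      by (cases "fst c"; cases "fst s") auto
    then have "lts c Rb (h, e)" "lts s Rb (h', f)"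
      using lts.rollback by (metis prod.collapse)+
    then show False using stuck no_red0 not_One unfolding red_def by blast
  qed simp
qed

theorem theorem2:
  fixes \<rho> \<sigma> :: "'n ctr"
  assumes "retractable_contract \<rho>" and "retractable_contract \<sigma>"
    and "derivable {} \<rho> \<sigma>"
  shows "compliant \<rho> \<sigma>"
  unfolding compliant_def compliant_h_def
proof (intro allI impI, elim conjE)
  fix c' s'
  assume reach: "red\<^sup>*\<^sup>* (([], Some \<rho>), ([], Some \<sigma>)) (c', s')" and stuck: "\<nexists>q. red (c', s') q"
  have "good_pair \<rho> \<sigma>"
    using assms unfolding good_pair_def wf_ctr_def retractable_contract_def by blast
  then have "compliance_inv ([], Some \<rho>) ([], Some \<sigma>)" by (rule compliance_inv_good_pair)
  with reach have "compliance_inv c' s'"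
    by (induction rule: rtranclp_induct2) (auto intro: compliance_inv_red)
  then show "snd c' = Some One" using stuck by (rule compliance_inv_stuck)
qed

end
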